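(* Let $I_n:=\iint_T \frac{(-\ln xy)^n}{xy}\,dx\,dy$. Then $I_n\sim 2\,n!$ as $n\to\infty$. More precisely, for every fixed integer $K\ge1$, \[ \frac{I_n}{n!}=\sum_{j=1}^{K}\binom{2j}{j}\frac{1}{j^{\,n+2}} + O\!\left((K+1)^{-n}\right)\qquad(n\to\infty), \] i.e. $I_n/n!\approx 2+\frac{6}{2^{n+2}}+\frac{20}{3^{n+2}}+\frac{70}{4^{n+2}}+\cdots$.
   Context: $T:=\{(x,y)\in[0,1]^2 : x+y\ge 1\}$. *)

theory Defs
  imports "HOL-Analysis.Analysis" "HOL-Library.Landau_Symbols"
begin

definition T :: "(real \<times> real) set" where
  "T = {(x, y). 0 \<le> x \<and> x \<le> 1 \<and> 0 \<le> y \<and> y \<le> 1 \<and> x + y \<ge> 1}"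

definition integrand :: "nat \<Rightarrow> real \<times> real \<Rightarrow> real" where
  "integrand n = (\<lambda>(x, y). (- ln (x * y)) ^ n / (x * y))"

definition I :: "nat \<Rightarrow> real" where
  "I n = (\<integral>p\<in>T. integrand n p \<partial>lborel)"

end

theory Submission
  imports Defs "HOL-Probability.Distributions"
begin

(* The integrand depends only on u = x*y.  Integrating out x (with y = u/x) gives
     I n = \<integral>_{0<u\<le>1} (-ln u)^n / u * profile u du,
   where profile u = \<integral> dx/x over the fibre {x : x(1-x) \<le> u \<le> x, 0 < x \<le> 1}.  This fibre
   integral is -ln u for u \<ge> 1/4 and -2 ln r(u) for u < 1/4, r(u) = (1 + sqrt(1-4u))/2 being
   the larger root of x(1-x) = u.  Since t \<cdot> d/dt (-2 ln r(t)) = 1/sqrt(1-4t) - 1, the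
   generating function of the central binomial coefficients gives
     -2 ln r(t) = \<Sum>_{j\<ge>1} C(2j,j) t^j / j,
   and a tail estimate yields |profile u - \<Sum>_{j\<le>K} C(2j,j) u^j / j| \<le> M_K u^(K+1) on (0,1].
   Finally \<integral>_0^1 (-ln u)^n u^(j-1) du = n!/j^(n+1), so integrating the approximation term by
   term gives |I n / n! - \<Sum>_{j\<le>K} C(2j,j)/j^(n+2)| \<le> M_K/(K+1)^(n+1), from which both the
   big-O statement and (with K = 1) the asymptotic equivalence I n \<sim> 2 n! follow.
   The file develops, in order: the central binomial series, the profile and its polynomial
   approximation, the profile as a fibre integral, the moments of the kernel (-ln u)^n/u, the
   reduction of the double integral, and the resulting error bound (valid for every K \<ge> 0),
   from which the theorem is read off. *)

section \<open>The generating function of the central binomial coefficients\<close>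

definition central_binom :: "nat \<Rightarrow> real" where
  "central_binom j = real ((2*j) choose j)"

lemma central_binom_nonneg: "0 \<le> central_binom j"
  by (simp add: central_binom_def)

text \<open>The central binomial coefficients are, up to sign and scaling, the coefficients of the
  binomial series of exponent -1/2; this follows from the duplication formula for rising
  factorials.\<close>

lemma central_binom_gbinomial: "((-1/2::real) gchoose k) * (-4)^k = central_binom k"
proof -
  have double: "fact (2*k) = (4::real)^k * pochhammer (1/2) k * fact k"
    using pochhammer_double[of "1/2::real" k]
    by (simp add: pochhammer_fact[symmetric] power_mult)
  have "((-1/2::real) gchoose k) * (-4)^k = 4^k * pochhammer (1/2) k / fact k"
    by (simp add: gbinomial_pochhammer power_mult_distrib[symmetric])
  also have "\<dots> = fact (2*k) / (fact k * fact k)"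
    using double by (simp add: field_simps mult.commute)
  also have "\<dots> = central_binom k"
    by (simp add: central_binom_def binomial_fact)
  finally show ?thesis .
qed

lemma central_binom_series:
  assumes "\<bar>t\<bar> < 1/4"
  shows "(\<lambda>n. central_binom n * t^n) sums (1 / sqrt (1 - 4*t))"
proof -
  have "(\<lambda>n. ((-1/2) gchoose n) * (-4*t)^n) sums (1 + -4*t) powr (-1/2)"
    using assms by (intro gen_binomial_real) simp
  moreover have "((-1/2::real) gchoose n) * (-4*t)^n = central_binom n * t^n" for n
  proof -
    have "(-4*t)^n = (-4)^n * t^n" by (simp only: power_mult_distrib)
    thus ?thesis using central_binom_gbinomial[of n] by (metis mult.assoc)
  qed
  moreover have "(1 + -4*t) powr (-1/2) = 1 / sqrt (1 - 4*t)"
    using assms by (simp add: powr_minus_divide powr_half_sqrt)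
  ultimately show ?thesis by simp
qed

text \<open>For 0 \<le> t \<le> 1/8 the series has nonnegative terms and its tail after degree K is at
  most (8t)^(K+1) times the value sqrt 2 of the series at t = 1/8.\<close>

lemma central_binom_series_tail:
  assumes "0 \<le> t" "t \<le> 1/8"
  shows "0 \<le> 1 / sqrt (1 - 4*t) - (\<Sum>j\<le>K. central_binom j * t^j)"
    and "1 / sqrt (1 - 4*t) - (\<Sum>j\<le>K. central_binom j * t^j) \<le> 8^(K+1) * sqrt 2 * t^(K+1)"
proof -
  define tail where "tail = (\<lambda>n. if n \<le> K then 0 else central_binom n * t^n)"
  have tail_sums: "tail sums (1 / sqrt (1 - 4*t) - (\<Sum>j\<le>K. central_binom j * t^j))"
  proof -
    have "(\<lambda>n. central_binom n * t^n - (if n \<in> {..K} then central_binom n * t^n else 0))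
            sums (1 / sqrt (1 - 4*t) - (\<Sum>j\<in>{..K}. central_binom j * t^j))"
      using assms by (intro sums_diff central_binom_series sums_If_finite_set) auto
    moreover have "(\<lambda>n. central_binom n * t^n - (if n \<in> {..K} then central_binom n * t^n else 0)) = tail"
      by (auto simp: tail_def)
    ultimately show ?thesis by simp
  qed
  have tail_nonneg: "0 \<le> tail n" for n
    using assms central_binom_nonneg by (simp add: tail_def)
  show "0 \<le> 1 / sqrt (1 - 4*t) - (\<Sum>j\<le>K. central_binom j * t^j)"
    using sums_le[OF _ sums_zero tail_sums] tail_nonneg by auto
  have at_eighth: "(\<lambda>n. central_binom n * (1/8)^n) sums sqrt 2"
    using central_binom_series[of "1/8"] by (simp add: real_sqrt_divide)
  have majorant: "tail n \<le> (8*t)^(K+1) * (central_binom n * (1/8)^n)" for n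
  proof (cases "n \<le> K")
    case False
    have "t^n = (8*t * (1/8))^n" by simp
    also have "\<dots> = (8*t)^n * (1/8)^n" by (rule power_mult_distrib)
    finally have "tail n = central_binom n * (8*t)^n * (1/8)^n"
      using False by (simp add: tail_def mult.assoc)
    also have "\<dots> \<le> central_binom n * (8*t)^(K+1) * (1/8)^n"
      using False assms central_binom_nonneg
      by (intro mult_right_mono mult_left_mono power_decreasing) auto
    also have "\<dots> = (8*t)^(K+1) * (central_binom n * (1/8)^n)"
      by (simp only: mult.assoc mult.left_commute)
    finally show ?thesis .
  qed (use assms central_binom_nonneg in \<open>simp add: tail_def\<close>)
  have "1 / sqrt (1 - 4*t) - (\<Sum>j\<le>K. central_binom j * t^j) \<le> (8*t)^(K+1) * sqrt 2"
    using sums_le[OF _ tail_sums sums_mult[OF at_eighth]] majorant by auto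
  thus "1 / sqrt (1 - 4*t) - (\<Sum>j\<le>K. central_binom j * t^j) \<le> 8^(K+1) * sqrt 2 * t^(K+1)"
    by (simp add: power_mult_distrib mult_ac)
qed

section \<open>The profile function and its polynomial approximation\<close>

definition root_plus :: "real \<Rightarrow> real" where
  "root_plus t = (1 + sqrt (1 - 4*t)) / 2"

definition root_minus :: "real \<Rightarrow> real" where
  "root_minus t = (1 - sqrt (1 - 4*t)) / 2"

lemma roots:
  assumes "0 < t" "t < 1/4"
  shows "root_minus t * root_plus t = t" "0 < root_minus t" "root_minus t < root_plus t"
    "root_plus t \<le> 1" "t \<le> root_minus t"
    "x * (1 - x) \<le> t \<longleftrightarrow> x \<le> root_minus t \<or> root_plus t \<le> x"
proof -
  define s where "s = sqrt (1 - 4*t)"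
  have s: "0 < s" "s < 1" "s * s = 1 - 4*t" using assms by (auto simp: s_def)
  note defs = root_minus_def root_plus_def s_def[symmetric]
  show prod: "root_minus t * root_plus t = t"
    unfolding defs using s by (simp add: field_simps)
  show "0 < root_minus t" "root_minus t < root_plus t" "root_plus t \<le> 1"
    using s by (auto simp: defs)
  have "t = root_minus t * root_plus t" using prod by simp
  also have "\<dots> \<le> root_minus t * 1"
    using s by (intro mult_left_mono) (auto simp: defs)
  finally show "t \<le> root_minus t" by simp
  have "t - x * (1 - x) = (x - root_minus t) * (x - root_plus t)"
    unfolding defs using s by (simp add: field_simps)
  hence "x * (1 - x) \<le> t \<longleftrightarrow> 0 \<le> (x - root_minus t) * (x - root_plus t)" by linarith
  also have "\<dots> \<longleftrightarrow> x \<le> root_minus t \<or> root_plus t \<le> x"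
    using s by (auto simp: zero_le_mult_iff defs)
  finally show "x * (1 - x) \<le> t \<longleftrightarrow> x \<le> root_minus t \<or> root_plus t \<le> x" .
qed

text \<open>Partial sums of the Taylor series of -2 ln (root_plus t) at 0.\<close>

definition log_series :: "nat \<Rightarrow> real \<Rightarrow> real" where
  "log_series K t = (\<Sum>j=1..K. central_binom j * t^j / j)"

text \<open>Both -2 ln (root_plus t) and log_series K t vanish at 0; t times their derivatives
  are 1/sqrt(1-4t) - 1 and the K-th partial sum of the central binomial series minus 1, so
  their difference is controlled by the tail of that series.\<close>

lemma neg_log_root_plus_deriv:
  assumes "t < 1/4"
  shows "((\<lambda>t. - 2 * ln (root_plus t)) has_real_derivative
           4 / (sqrt (1 - 4*t) * (1 + sqrt (1 - 4*t)))) (at t)"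
proof -
  have s: "0 < sqrt (1 - 4*t)" using assms by simp
  have "((\<lambda>t. - 2 * ln ((1 + sqrt (1 - 4*t)) / 2)) has_real_derivative
          (- 2 * ((inverse (sqrt (1 - 4*t)) / 2 * (- 4)) / 2) / ((1 + sqrt (1 - 4*t)) / 2))) (at t)"
    using s by (auto intro!: derivative_eq_intros simp: add_pos_pos)
  thus ?thesis using s by (simp add: root_plus_def field_simps)
qed

lemma neg_log_root_plus_deriv_scaled:
  assumes "t < 1/4"
  shows "t * (4 / (sqrt (1 - 4*t) * (1 + sqrt (1 - 4*t)))) = 1 / sqrt (1 - 4*t) - 1"
proof -
  define s where "s = sqrt (1 - 4*t)"
  have s: "0 < s" "s\<^sup>2 = 1 - 4*t" using assms by (auto simp: s_def)
  have "t * (4 / (s * (1 + s))) = ((1 - s) * (1 + s)) / (s * (1 + s))"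
    using s by (simp add: field_simps power2_eq_square)
  also have "\<dots> = (1 - s) / s" using s by simp
  also have "\<dots> = 1 / s - 1" using s by (simp add: field_simps)
  finally show ?thesis by (simp add: s_def)
qed

lemma log_series_deriv:
  "(log_series K has_real_derivative (\<Sum>j=1..K. central_binom j * t^(j-1))) (at t)"
proof -
  have "((\<lambda>t. \<Sum>j=1..K. central_binom j * t^j / j) has_real_derivative
          (\<Sum>j=1..K. central_binom j * (j * t^(j-1)) / j)) (at t)"
    by (auto intro!: derivative_eq_intros sum.cong)
  thus ?thesis unfolding log_series_def by simp
qed

lemma log_series_deriv_scaled:
  "t * (\<Sum>j=1..K. central_binom j * t^(j-1)) = (\<Sum>j\<le>K. central_binom j * t^j) - 1"
proof -
  have "t * (\<Sum>j=1..K. central_binom j * t^(j-1)) = (\<Sum>j=1..K. central_binom j * t^j)"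
    by (simp add: sum_distrib_left) (intro sum.cong, auto simp: power_eq_if)
  moreover have "(\<Sum>j\<le>K. central_binom j * t^j) = central_binom 0 + (\<Sum>j=1..K. central_binom j * t^j)"
    by (simp add: atMost_atLeast0 sum.atLeast_Suc_atMost)
  ultimately show ?thesis by (simp add: central_binom_def)
qed

text \<open>Near 0, -2 ln (root_plus t) exceeds its Taylor polynomial of degree K by at most
  8^(K+1) sqrt 2 t^(K+1): by the mean value theorem, with the derivative of the difference
  bounded via the tail of the central binomial series.\<close>

lemma neg_log_root_plus_approx:
  assumes "0 \<le> t" "t \<le> 1/8"
  shows "0 \<le> - 2 * ln (root_plus t) - log_series K t"
    and "- 2 * ln (root_plus t) - log_series K t \<le> 8^(K+1) * sqrt 2 * t^(K+1)"
proof -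
  define A where "A = 8^(K+1) * sqrt 2"
  define h where "h = (\<lambda>t. - 2 * ln (root_plus t) - log_series K t)"
  define h' where "h' = (\<lambda>t. 4 / (sqrt (1 - 4*t) * (1 + sqrt (1 - 4*t)))
                              - (\<Sum>j=1..K. central_binom j * t^(j-1)))"
  have h_deriv: "(h has_real_derivative h' x) (at x)" if "x < 1/4" for x
    unfolding h_def h'_def using that by (intro DERIV_diff neg_log_root_plus_deriv log_series_deriv)
  have h_0: "h 0 = 0" by (simp add: h_def root_plus_def log_series_def)
  have h'_bounds: "0 \<le> h' x \<and> h' x \<le> A * x^K" if "0 < x" "x \<le> 1/8" for x
  proof -
    have "x * h' x = 1 / sqrt (1 - 4*x) - (\<Sum>j\<le>K. central_binom j * x^j)"
      unfolding h'_def right_diff_distrib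
      using neg_log_root_plus_deriv_scaled[of x] log_series_deriv_scaled[of x K] that by simp
    hence "0 \<le> x * h' x" "x * h' x \<le> A * x^(K+1)"
      using central_binom_series_tail[of x K] that by (auto simp: A_def)
    thus ?thesis using that
      by (auto simp: zero_le_mult_iff mult.commute[of x] mult.assoc[symmetric] mult_le_cancel_right)
  qed
  have "0 \<le> h t \<and> h t \<le> A * t^(K+1)"
  proof (cases "t = 0")
    case False
    hence t: "0 < t" using assms by simp
    obtain z where z: "0 < z" "z < t" "h t - h 0 = (t - 0) * h' z"
      using MVT2[OF t, of h h'] h_deriv assms by force
    have z_bounds: "0 \<le> h' z" "h' z \<le> A * z^K" using h'_bounds[of z] z assms by auto
    have "A * z^K \<le> A * t^K" using z by (intro mult_left_mono power_mono) (auto simp: A_def)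
    hence "t * h' z \<le> t * (A * t^K)" using z_bounds t by (intro mult_left_mono) auto
    thus ?thesis using z z_bounds h_0 t by (simp add: mult_ac)
  qed (simp add: h_0)
  thus "0 \<le> - 2 * ln (root_plus t) - log_series K t"
    "- 2 * ln (root_plus t) - log_series K t \<le> 8^(K+1) * sqrt 2 * t^(K+1)"
    by (auto simp: h_def A_def)
qed

text \<open>The profile of the triangle T in closed form; profile_fibre_integral below shows that
  it is the integral of dx/x over the x with (x, u/x) \<in> T.\<close>

definition profile :: "real \<Rightarrow> real" where
  "profile t = (if 1/4 \<le> t then - ln t else - 2 * ln (root_plus t))"

lemma profile_measurable [measurable]: "profile \<in> borel_measurable borel"
  unfolding profile_def root_plus_def by measurable

lemma log_series_measurable [measurable]: "log_series K \<in> borel_measurable borel"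
  unfolding log_series_def by measurable

lemma log_series_nonneg: "0 \<le> t \<Longrightarrow> 0 \<le> log_series K t"
  unfolding log_series_def by (intro sum_nonneg) (simp add: central_binom_nonneg)

lemma log_series_le:
  assumes "0 \<le> t" "t \<le> 1"
  shows "log_series K t \<le> (\<Sum>j=1..K. central_binom j)"
  unfolding log_series_def
proof (intro sum_mono)
  fix j assume j: "j \<in> {1..K}"
  have "t^j \<le> 1" using assms by (simp add: power_le_one)
  hence "t^j / j \<le> 1" using j by (simp add: divide_le_eq)
  thus "central_binom j * t^j / j \<le> central_binom j"
    using central_binom_nonneg mult_left_mono[of "t^j / j" 1 "central_binom j"] by simp
qed

lemma profile_range:
  assumes "0 < t" "t \<le> 1"
  shows "0 \<le> profile t" "profile t \<le> 2"
proof -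
  have ln2: "ln (2::real) \<le> 1" using ln_2_less_1 by simp
  have "0 \<le> profile t \<and> profile t \<le> 2"
  proof (cases "1/4 \<le> t")
    case True
    have "- ln t \<le> - ln (1/4)" using True by simp
    also have "- ln (1/4::real) = 2 * ln 2"
      using ln_realpow[of 2 2] by (simp add: ln_div)
    finally show ?thesis using True assms ln2 by (simp add: profile_def)
  next
    case False
    have "1/2 \<le> root_plus t" "root_plus t \<le> 1"
      using False assms by (auto simp: root_plus_def)
    hence "ln (1/2) \<le> ln (root_plus t)" "ln (root_plus t) \<le> 0" by auto
    thus ?thesis using False ln2 by (simp add: profile_def ln_div)
  qed
  thus "0 \<le> profile t" "profile t \<le> 2" by auto
qed

text \<open>The uniform approximation of the profile on (0,1] used for the expansion of I n: for
  t \<le> 1/8 this is neg_log_root_plus_approx, for t > 1/8 both sides are bounded and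
  profile_const K t^(K+1) \<ge> 1 absorbs them.\<close>

definition profile_const :: "nat \<Rightarrow> real" where
  "profile_const K = 8^(K+1) * (sqrt 2 + 2 + (\<Sum>j=1..K. central_binom j))"

lemma profile_const_nonneg: "0 \<le> profile_const K"
  unfolding profile_const_def by (intro mult_nonneg_nonneg add_nonneg_nonneg sum_nonneg)
    (auto simp: central_binom_nonneg)

lemma profile_approx:
  assumes "0 < t" "t \<le> 1"
  shows "\<bar>profile t - log_series K t\<bar> \<le> profile_const K * t^(K+1)"
proof (cases "t \<le> 1/8")
  case True
  have "profile t = - 2 * ln (root_plus t)" using True by (simp add: profile_def)
  moreover have "8^(K+1) * sqrt 2 * t^(K+1) \<le> profile_const K * t^(K+1)"
    unfolding profile_const_def using assms
    by (intro mult_right_mono mult_left_mono)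
      (auto intro!: add_nonneg_nonneg sum_nonneg simp: central_binom_nonneg)
  ultimately show ?thesis using neg_log_root_plus_approx[of t K] True assms by linarith
next
  case False
  define S where "S = (\<Sum>j=1..K. central_binom j)"
  have "1 \<le> (8*t)^(K+1)" using False by (intro one_le_power) auto
  moreover have "0 \<le> sqrt 2 + 2 + S"
    using sum_nonneg[of "{1..K}" central_binom] central_binom_nonneg by (simp add: S_def)
  ultimately have "sqrt 2 + 2 + S \<le> (sqrt 2 + 2 + S) * (8*t)^(K+1)"
    using mult_left_mono[of 1 "(8*t)^(K+1)" "sqrt 2 + 2 + S"] by simp
  hence bound: "sqrt 2 + 2 + S \<le> profile_const K * t^(K+1)"
    by (simp add: profile_const_def S_def power_mult_distrib mult_ac)
  have "0 \<le> log_series K t" "log_series K t \<le> S"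
    using log_series_nonneg[of t K] log_series_le[of t K] assms by (auto simp: S_def)
  moreover have "0 \<le> profile t" "profile t \<le> 2" using profile_range assms by auto
  moreover have "0 \<le> sqrt (2::real)" by simp
  ultimately show ?thesis using bound by linarith
qed

section \<open>The profile as a fibre integral\<close>

text \<open>Substituting y = u/x in the integral over T turns the inner integral into an integral
  over the fibre {x : 0 < x \<le> 1, x(1-x) \<le> u \<le> x} with weight 1/x.\<close>

definition fibre_weight :: "real \<Rightarrow> real \<Rightarrow> real" where
  "fibre_weight u x = (if 0 < x \<and> x \<le> 1 \<and> x*(1-x) \<le> u \<and> u \<le> x then 1/x else 0)"

lemma nn_integral_inverse:
  assumes "0 < a" "a \<le> b"
  shows "(\<integral>\<^sup>+x. ennreal (1/x) * indicator {a..b} x \<partial>lborel) = ennreal (ln b - ln a)"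
  using assms by (intro nn_integral_FTC_Icc) (auto intro!: derivative_eq_intros)

text \<open>For u \<ge> 1/4 the fibre is [u,1]; for u < 1/4 it is [u, root_minus u] \<union> [root_plus u, 1],
  and ln root_minus u + ln root_plus u = ln u.\<close>

lemma profile_fibre_integral:
  assumes u: "0 < u" "u \<le> 1"
  shows "(\<integral>\<^sup>+x. ennreal (fibre_weight u x) \<partial>lborel) = ennreal (profile u)"
proof (cases "1/4 \<le> u")
  case True
  have quarter: "x * (1 - x) \<le> 1/4" for x :: real
    using zero_le_square[of "2*x - 1"] by (simp add: algebra_simps)
  have "ennreal (fibre_weight u x) = ennreal (1/x) * indicator {u..1} x" for x
    using quarter[of x] True u by (auto simp: fibre_weight_def split: split_indicator)
  hence "(\<integral>\<^sup>+x. ennreal (fibre_weight u x) \<partial>lborel) = ennreal (ln 1 - ln u)"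
    using u by (simp add: nn_integral_inverse)
  thus ?thesis using True by (simp add: profile_def)
next
  case False
  hence r: "root_minus u * root_plus u = u" "0 < root_minus u" "root_minus u < root_plus u"
    "root_plus u \<le> 1" "u \<le> root_minus u"
    "\<And>x. x * (1 - x) \<le> u \<longleftrightarrow> x \<le> root_minus u \<or> root_plus u \<le> x"
    using roots[OF u(1)] by auto
  have "ennreal (fibre_weight u x) =
          ennreal (1/x) * indicator {u..root_minus u} x + ennreal (1/x) * indicator {root_plus u..1} x"
    for x
    using r u by (auto simp: fibre_weight_def split: split_indicator)
  hence "(\<integral>\<^sup>+x. ennreal (fibre_weight u x) \<partial>lborel) =
           (\<integral>\<^sup>+x. ennreal (1/x) * indicator {u..root_minus u} x \<partial>lborel)
         + (\<integral>\<^sup>+x. ennreal (1/x) * indicator {root_plus u..1} x \<partial>lborel)"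
    by (simp add: nn_integral_add)
  also have "\<dots> = ennreal (ln (root_minus u) - ln u) + ennreal (ln 1 - ln (root_plus u))"
    using r u by (simp add: nn_integral_inverse)
  also have "\<dots> = ennreal (ln (root_minus u) - ln u - ln (root_plus u))"
    using r u by (subst ennreal_plus[symmetric]) auto
  also have "ln (root_minus u) - ln u - ln (root_plus u) = profile u"
  proof -
    have "ln u = ln (root_minus u) + ln (root_plus u)"
      using r(1-3) ln_mult[of "root_minus u" "root_plus u"] by simp
    thus ?thesis using False by (simp add: profile_def)
  qed
  finally show ?thesis .
qed

section \<open>Moments of the kernel (-ln u)^n / u\<close>

definition log_kernel :: "nat \<Rightarrow> real \<Rightarrow> real" where
  "log_kernel n u = (- ln u)^n / u"

lemma log_kernel_measurable [measurable]: "log_kernel n \<in> borel_measurable borel"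
  unfolding log_kernel_def by measurable

lemma log_kernel_zero [simp]: "log_kernel n 0 = 0"
  by (simp add: log_kernel_def)

lemma log_kernel_nonneg: "0 \<le> u \<Longrightarrow> u \<le> 1 \<Longrightarrow> 0 \<le> log_kernel n u"
  by (cases "u = 0") (auto simp: log_kernel_def intro!: divide_nonneg_pos zero_le_power)

text \<open>The substitution u = exp s maps (-\<infinity>,0] onto (0,1].  The library provides it on
  compact intervals; monotone convergence extends it to the half-line.\<close>

lemma nn_integral_exp_substitution_compact:
  fixes \<phi> :: "real \<Rightarrow> real"
  assumes [measurable]: "\<phi> \<in> borel_measurable borel"
  shows "(\<integral>\<^sup>+t. ennreal (\<phi> t * indicator {exp (- real i)..exp 0} t) \<partial>lborel) =
         (\<integral>\<^sup>+s. ennreal (\<phi> (exp s) * exp s * indicator {- real i..0} s) \<partial>lborel)"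
proof (rule nn_integral_substitution)
  show "set_borel_measurable borel {exp (- real i)..exp 0} \<phi>"
    unfolding set_borel_measurable_def by measurable
qed (auto intro!: derivative_eq_intros continuous_intros)

lemma nn_integral_exp_substitution:
  fixes \<phi> :: "real \<Rightarrow> real"
  assumes [measurable]: "\<phi> \<in> borel_measurable borel"
  shows "(\<integral>\<^sup>+t. ennreal (\<phi> t * indicator {0<..1} t) \<partial>lborel) =
         (\<integral>\<^sup>+s. ennreal (\<phi> (exp s) * exp s * indicator {..0} s) \<partial>lborel)"
proof -
  let ?A = "\<lambda>i. \<integral>\<^sup>+t. ennreal (\<phi> t * indicator {exp (- real i)..exp 0} t) \<partial>lborel"
  let ?B = "\<lambda>i. \<integral>\<^sup>+s. ennreal (\<phi> (exp s) * exp s * indicator {- real i..0} s) \<partial>lborel"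
  have lim_A: "?A \<longlonglongrightarrow> (\<integral>\<^sup>+t. ennreal (\<phi> t * indicator {0<..1} t) \<partial>lborel)"
  proof (rule nn_integral_LIMSEQ)
    have exp_mono: "exp (- real n) \<le> exp (- real m)" if "m \<le> n" for m n using that by simp
    show "incseq (\<lambda>i t. ennreal (\<phi> t * indicator {exp (- real i)..exp 0} t))"
      using exp_mono
      by (auto simp: incseq_def le_fun_def split: split_indicator intro!: ennreal_leI)
        (meson order_trans exp_mono)
    show "(\<lambda>t. ennreal (\<phi> t * indicator {exp (- real i)..exp 0} t)) \<in> borel_measurable lborel" for i
      by measurable
    fix t
    show "(\<lambda>i. ennreal (\<phi> t * indicator {exp (- real i)..exp 0} t))
            \<longlonglongrightarrow> ennreal (\<phi> t * indicator {0<..1} t)"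
    proof (cases "0 < t")
      case True
      obtain N :: nat where N: "- ln t < N" using reals_Archimedean2 by blast
      have "eventually (\<lambda>i. ennreal (\<phi> t * indicator {exp (- real i)..exp 0} t)
                           = ennreal (\<phi> t * indicator {0<..1} t)) sequentially"
        unfolding eventually_sequentially
      proof (intro exI allI impI)
        fix i assume "N \<le> i"
        hence "- ln t < i" using N by linarith
        hence "exp (- real i) < t" using True
          by (metis exp_less_cancel_iff exp_ln minus_less_iff)
        thus "ennreal (\<phi> t * indicator {exp (- real i)..exp 0} t)
                = ennreal (\<phi> t * indicator {0<..1} t)"
          using True by (auto split: split_indicator)
      qed
      then show ?thesis by (rule tendsto_eventually)
    next
      case False
      hence "t \<notin> {exp (- real i)..exp 0}" for i
        using exp_gt_zero[of "- real i"] by (auto simp del: exp_gt_zero)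
      then show ?thesis using False by simp
    qed
  qed
  have lim_B: "?B \<longlonglongrightarrow> (\<integral>\<^sup>+s. ennreal (\<phi> (exp s) * exp s * indicator {..0} s) \<partial>lborel)"
  proof (rule nn_integral_LIMSEQ)
    show "incseq (\<lambda>i s. ennreal (\<phi> (exp s) * exp s * indicator {- real i..0} s))"
      by (auto simp: incseq_def le_fun_def split: split_indicator intro!: ennreal_leI)
    show "(\<lambda>s. ennreal (\<phi> (exp s) * exp s * indicator {- real i..0} s))
            \<in> borel_measurable lborel" for i
      by measurable
    fix s
    show "(\<lambda>i. ennreal (\<phi> (exp s) * exp s * indicator {- real i..0} s))
            \<longlonglongrightarrow> ennreal (\<phi> (exp s) * exp s * indicator {..0} s)"
    proof (rule tendsto_eventually)
      obtain N :: nat where N: "- s < N" using reals_Archimedean2 by blast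
      show "eventually (\<lambda>i. ennreal (\<phi> (exp s) * exp s * indicator {- real i..0} s)
                           = ennreal (\<phi> (exp s) * exp s * indicator {..0} s)) sequentially"
        unfolding eventually_sequentially
        using N by (intro exI[of _ N] allI impI) (auto split: split_indicator)
    qed
  qed
  have compact: "?A = ?B" by (intro ext nn_integral_exp_substitution_compact) simp
  from lim_A have lim_A_transformed:
    "?B \<longlonglongrightarrow> (\<integral>\<^sup>+t. ennreal (\<phi> t * indicator {0<..1} t) \<partial>lborel)"
    by (simp only: compact)
  show ?thesis by (rule LIMSEQ_unique[OF lim_A_transformed lim_B])
qed

text \<open>After u = exp s and a rescaling s \<mapsto> -s/j, the j-th moment becomes a Gamma integral:
  \<integral>_0^1 (-ln u)^n u^(j-1) du = n! / j^(n+1).\<close>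

lemma log_kernel_moment:
  assumes j: "j \<ge> 1"
  shows "(\<integral>\<^sup>+u. ennreal (log_kernel n u * u^j * indicator {0<..1} u) \<partial>lborel)
           = ennreal (fact n / real j^(n+1))"
proof -
  have "(\<integral>\<^sup>+u. ennreal (log_kernel n u * u^j * indicator {0<..1} u) \<partial>lborel) =
        (\<integral>\<^sup>+s. ennreal ((- ln (exp s))^n / exp s * exp s^j * exp s * indicator {..0} s)
           \<partial>lborel)"
    unfolding log_kernel_def by (rule nn_integral_exp_substitution) measurable
  also have "\<dots> = (\<integral>\<^sup>+s. ennreal ((- s)^n * exp (real j * s) * indicator {..0} s) \<partial>lborel)"
    by (intro nn_integral_cong) (simp add: exp_of_nat_mult[symmetric])
  also have "\<dots> = \<bar>- 1 / real j\<bar> * (\<integral>\<^sup>+x. ennreal ((- (0 + (- 1 / real j) * x))^n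
      * exp (real j * (0 + (- 1 / real j) * x)) * indicator {..0} (0 + (- 1 / real j) * x)) \<partial>lborel)"
    using j by (intro nn_integral_real_affine) auto
  also have "(\<integral>\<^sup>+x. ennreal ((- (0 + (- 1 / real j) * x))^n
      * exp (real j * (0 + (- 1 / real j) * x)) * indicator {..0} (0 + (- 1 / real j) * x)) \<partial>lborel)
     = (\<integral>\<^sup>+x. ennreal ((1 / real j)^n) * (ennreal (x^n * exp (- x)) * indicator {0..} x) \<partial>lborel)"
  proof (intro nn_integral_cong)
    fix x :: real
    have jp: "real j > 0" using j by simp
    have rescaled_indicator:
      "indicator {..0} (0 + (- 1 / real j) * x) = (indicator {0..} x :: real)"
      using jp by (auto split: split_indicator simp: field_simps)
    have rescaled_exp: "exp (real j * (0 + (- 1 / real j) * x)) = exp (- x)" using jp by simp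
    have rescaled_power: "(- (0 + (- 1 / real j) * x))^n = (1 / real j)^n * x^n"
      by (simp add: power_divide)
    show "ennreal ((- (0 + (- 1 / real j) * x))^n * exp (real j * (0 + (- 1 / real j) * x))
            * indicator {..0} (0 + (- 1 / real j) * x))
       = ennreal ((1 / real j)^n) * (ennreal (x^n * exp (- x)) * indicator {0..} x)"
      unfolding rescaled_indicator rescaled_exp rescaled_power using jp
      by (auto split: split_indicator simp: ennreal_mult[symmetric] mult_ac)
  qed
  also have "\<dots> = ennreal ((1 / real j)^n)
                     * (\<integral>\<^sup>+x. ennreal (x^n * exp (- x)) * indicator {0..} x \<partial>lborel)"
    by (rule nn_integral_cmult) measurable
  also have "\<dots> = ennreal ((1 / real j)^n) * ennreal (fact n)"
    using nn_intergal_power_times_exp_Ici[of n] by simp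
  finally show ?thesis using j
    by (simp add: ennreal_mult[symmetric] power_divide field_simps
        del: ennreal_of_nat_eq_real_of_nat)
qed

section \<open>Reduction of the double integral to a single integral\<close>

lemma integrand_eq_log_kernel: "integrand n p = log_kernel n (fst p * snd p)"
  by (cases p) (simp add: integrand_def log_kernel_def)

lemma indicator_T:
  "indicator T p = (if 0 \<le> fst p \<and> fst p \<le> 1 \<and> 0 \<le> snd p \<and> snd p \<le> 1 \<and> 1 \<le> fst p + snd p
                    then 1 else (0::real))"
  by (cases p) (simp add: T_def indicator_def)

lemma integrand_on_T_measurable [measurable]:
  "(\<lambda>p. indicator T p * integrand n p) \<in> borel_measurable (lborel \<Otimes>\<^sub>M lborel)"
  unfolding indicator_T integrand_eq_log_kernel log_kernel_def by measurable

lemma integrand_on_T_nonneg: "0 \<le> indicator T p * integrand n p"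
proof (cases "p \<in> T")
  case True
  then obtain x y where p: "p = (x,y)" "0 \<le> x" "x \<le> 1" "0 \<le> y" "y \<le> 1"
    by (cases p) (auto simp: T_def)
  have "x * y \<le> 1" using p by (simp add: mult_le_one)
  thus ?thesis using True p by (auto simp: integrand_eq_log_kernel intro!: log_kernel_nonneg)
qed simp

text \<open>For fixed x \<in> (0,1], the substitution y = u/x turns the slice of T at x into the
  u-interval [x(1-x), x] with Jacobian 1/x.\<close>

lemma nn_integral_T_slice:
  "(\<integral>\<^sup>+y. ennreal (indicator T (x,y) * integrand n (x,y)) \<partial>lborel) =
   (\<integral>\<^sup>+u. ennreal (log_kernel n u * fibre_weight u x) \<partial>lborel)"
proof (cases "0 < x \<and> x \<le> 1")
  case True
  hence x: "0 < x" "x \<le> 1" by auto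
  define G where "G = (\<lambda>y. ennreal (if 1 - x \<le> y \<and> y \<le> 1 then log_kernel n (x*y) else 0))"
  have [measurable]: "G \<in> borel_measurable borel" unfolding G_def log_kernel_def by measurable
  have G_rescaled:
    "G ((1/x) * u) = ennreal (if x*(1-x) \<le> u \<and> u \<le> x then log_kernel n u else 0)" for u
  proof -
    have "1 - x \<le> u / x \<longleftrightarrow> x*(1-x) \<le> u" using x by (simp add: le_divide_eq mult.commute)
    moreover have "u / x \<le> 1 \<longleftrightarrow> u \<le> x" using x by (simp add: divide_le_eq)
    ultimately show ?thesis using x by (simp add: G_def)
  qed
  have weight: "ennreal (1/x) * ennreal (if x*(1-x) \<le> u \<and> u \<le> x then log_kernel n u else 0)
                  = ennreal (log_kernel n u * fibre_weight u x)" for u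
  proof (cases "x*(1-x) \<le> u \<and> u \<le> x")
    case True
    have "0 \<le> x*(1-x)" using x by simp
    hence "0 \<le> u" "u \<le> 1" using True x by linarith+
    hence "0 \<le> log_kernel n u" by (rule log_kernel_nonneg)
    thus ?thesis using True x by (simp add: fibre_weight_def ennreal_mult[symmetric])
  qed (auto simp: fibre_weight_def)
  have "(\<integral>\<^sup>+y. ennreal (indicator T (x,y) * integrand n (x,y)) \<partial>lborel) = (\<integral>\<^sup>+y. G y \<partial>lborel)"
    using x by (intro nn_integral_cong) (auto simp: G_def indicator_T integrand_eq_log_kernel)
  also have "\<dots> = ennreal (1/x) * (\<integral>\<^sup>+u. G ((1/x) * u) \<partial>lborel)"
    using x nn_integral_real_affine[of G "1/x" 0] by simp
  also have "\<dots> = (\<integral>\<^sup>+u. ennreal (log_kernel n u * fibre_weight u x) \<partial>lborel)"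
    unfolding G_rescaled weight[symmetric]
    by (rule nn_integral_cmult[symmetric]) (unfold log_kernel_def, measurable)
  finally show ?thesis .
next
  case False
  have slice_zero: "indicator T (x,y) * integrand n (x,y) = 0" for y
    using False by (cases "x = 0") (auto simp: indicator_T integrand_eq_log_kernel)
  have weight_zero: "fibre_weight u x = 0" for u
    using False by (auto simp: fibre_weight_def)
  show ?thesis by (simp add: slice_zero weight_zero)
qed

lemma nn_integral_fibre:
  "(\<integral>\<^sup>+x. ennreal (log_kernel n u * fibre_weight u x) \<partial>lborel) =
   ennreal (log_kernel n u * profile u * indicator {0<..1} u)"
proof (cases "0 < u \<and> u \<le> 1")
  case True
  have nonneg: "0 \<le> log_kernel n u" "0 \<le> profile u"
    using True log_kernel_nonneg profile_range by auto
  have [measurable]: "fibre_weight u \<in> borel_measurable borel"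
    unfolding fibre_weight_def by measurable
  have "0 \<le> fibre_weight u x" for x by (simp add: fibre_weight_def)
  hence "(\<integral>\<^sup>+x. ennreal (log_kernel n u * fibre_weight u x) \<partial>lborel)
          = (\<integral>\<^sup>+x. ennreal (log_kernel n u) * ennreal (fibre_weight u x) \<partial>lborel)"
    using nonneg by (simp add: ennreal_mult)
  also have "\<dots> = ennreal (log_kernel n u) * ennreal (profile u)"
    using True by (simp add: nn_integral_cmult profile_fibre_integral)
  finally show ?thesis using True nonneg by (simp add: ennreal_mult[symmetric])
next
  case False
  have zero: "log_kernel n u * fibre_weight u x = 0" for x
  proof (cases "u = 0")
    case u_nonzero: False
    have "fibre_weight u x = 0"
    proof (rule ccontr)
      assume "fibre_weight u x \<noteq> 0"
      hence x: "0 < x" "x \<le> 1" "x * (1 - x) \<le> u" "u \<le> x"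
        by (auto simp: fibre_weight_def split: if_splits)
      have "0 \<le> x * (1 - x)" using x by simp
      thus False using x u_nonzero False by linarith
    qed
    thus ?thesis by simp
  qed simp
  have "ennreal (log_kernel n u * fibre_weight u x) = 0" for x
    by (simp only: zero ennreal_0)
  thus ?thesis using False by simp
qed

lemma nn_integral_T:
  "(\<integral>\<^sup>+p. ennreal (indicator T p * integrand n p) \<partial>lborel) =
   (\<integral>\<^sup>+u. ennreal (log_kernel n u * profile u * indicator {0<..1} u) \<partial>lborel)"
proof -
  have "(\<integral>\<^sup>+p. ennreal (indicator T p * integrand n p) \<partial>lborel) =
        (\<integral>\<^sup>+p. ennreal (indicator T p * integrand n p) \<partial>(lborel \<Otimes>\<^sub>M lborel))"
    by (simp only: lborel_prod)
  also have "\<dots> = (\<integral>\<^sup>+x. \<integral>\<^sup>+y. ennreal (indicator T (x,y) * integrand n (x,y)) \<partial>lborel \<partial>lborel)"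
    by (rule lborel.nn_integral_fst[symmetric]) measurable
  also have "\<dots> = (\<integral>\<^sup>+x. \<integral>\<^sup>+u. ennreal (log_kernel n u * fibre_weight u x) \<partial>lborel \<partial>lborel)"
    by (simp add: nn_integral_T_slice)
  also have "\<dots> = (\<integral>\<^sup>+u. \<integral>\<^sup>+x. ennreal (log_kernel n u * fibre_weight u x) \<partial>lborel \<partial>lborel)"
    by (rule lborel_pair.Fubini') (unfold log_kernel_def fibre_weight_def, measurable)
  also have "\<dots> = (\<integral>\<^sup>+u. ennreal (log_kernel n u * profile u * indicator {0<..1} u) \<partial>lborel)"
    by (simp add: nn_integral_fibre)
  finally show ?thesis .
qed

section \<open>The expansion of I n\<close>

lemma nn_integral_le_add_error:
  fixes f g e :: "'a \<Rightarrow> real"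
  assumes [measurable]: "g \<in> borel_measurable M" "e \<in> borel_measurable M"
    and "\<And>x. 0 \<le> g x" and "\<And>x. \<bar>f x - g x\<bar> \<le> e x"
  shows "(\<integral>\<^sup>+x. ennreal (f x) \<partial>M) \<le> (\<integral>\<^sup>+x. ennreal (g x) \<partial>M) + (\<integral>\<^sup>+x. ennreal (e x) \<partial>M)"
proof -
  have "ennreal (f x) \<le> ennreal (g x) + ennreal (e x)" for x
    using assms(3,4)[of x] by (simp add: ennreal_plus[symmetric] del: ennreal_plus)
  hence "(\<integral>\<^sup>+x. ennreal (f x) \<partial>M) \<le> (\<integral>\<^sup>+x. ennreal (g x) + ennreal (e x) \<partial>M)"
    by (intro nn_integral_mono)
  also have "\<dots> = (\<integral>\<^sup>+x. ennreal (g x) \<partial>M) + (\<integral>\<^sup>+x. ennreal (e x) \<partial>M)"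
    by (rule nn_integral_add) auto
  finally show ?thesis .
qed

definition moment_sum :: "nat \<Rightarrow> nat \<Rightarrow> real" where
  "moment_sum K n = (\<Sum>j=1..K. central_binom j / real j ^ (n + 2))"

lemma nn_integral_log_series:
  "(\<integral>\<^sup>+u. ennreal (log_kernel n u * log_series K u * indicator {0<..1} u) \<partial>lborel)
     = ennreal (fact n * moment_sum K n)"
proof -
  define c where "c = (\<lambda>j. central_binom j / j)"
  have c_nonneg: "0 \<le> c j" for j by (simp add: c_def central_binom_nonneg)
  have term_nonneg: "0 \<le> log_kernel n u * u^j * indicator {0<..1} u" for u j
    by (cases "0 < u \<and> u \<le> 1") (auto intro!: mult_nonneg_nonneg log_kernel_nonneg)
  have "log_kernel n u * log_series K u * indicator {0<..1} u
          = (\<Sum>j\<in>{1..K}. c j * (log_kernel n u * u^j * indicator {0<..1} u))" for u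
    by (simp add: log_series_def c_def sum_distrib_left sum_distrib_right mult_ac)
  hence "(\<integral>\<^sup>+u. ennreal (log_kernel n u * log_series K u * indicator {0<..1} u) \<partial>lborel) =
        (\<integral>\<^sup>+u. (\<Sum>j\<in>{1..K}. ennreal (c j)
                  * ennreal (log_kernel n u * u^j * indicator {0<..1} u)) \<partial>lborel)"
    using c_nonneg term_nonneg
    by (simp add: ennreal_mult sum_ennreal[symmetric] mult_nonneg_nonneg)
  also have "\<dots> = (\<Sum>j\<in>{1..K}. ennreal (c j)
                        * (\<integral>\<^sup>+u. ennreal (log_kernel n u * u^j * indicator {0<..1} u) \<partial>lborel))"
    by (simp add: nn_integral_sum nn_integral_cmult)
  also have "\<dots> = (\<Sum>j\<in>{1..K}. ennreal (c j) * ennreal (fact n / real j^(n+1)))"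
    by (intro sum.cong refl) (simp add: log_kernel_moment)
  also have "\<dots> = ennreal (\<Sum>j\<in>{1..K}. c j * (fact n / real j^(n+1)))"
    using c_nonneg by (simp add: sum_ennreal flip: ennreal_mult)
  also have "(\<Sum>j\<in>{1..K}. c j * (fact n / real j^(n+1))) = fact n * moment_sum K n"
    unfolding moment_sum_def c_def by (simp add: sum_distrib_left field_simps)
  finally show ?thesis .
qed

lemma nn_integral_profile_bounds:
  fixes n K :: nat
  defines "P \<equiv> \<integral>\<^sup>+u. ennreal (log_kernel n u * profile u * indicator {0<..1} u) \<partial>lborel"
    and "E \<equiv> profile_const K * (fact n / real (K+1)^(n+1))"
  shows "P \<le> ennreal (fact n * moment_sum K n) + ennreal E"
    and "ennreal (fact n * moment_sum K n) \<le> P + ennreal E"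
proof -
  define f where "f = (\<lambda>u. log_kernel n u * profile u * indicator {0<..1} u)"
  define g where "g = (\<lambda>u. log_kernel n u * log_series K u * indicator {0<..1} u)"
  define e where "e = (\<lambda>u. profile_const K * (log_kernel n u * u^(K+1) * indicator {0<..1} u))"
  have [measurable]: "f \<in> borel_measurable lborel" "g \<in> borel_measurable lborel"
    "e \<in> borel_measurable lborel"
    unfolding f_def g_def e_def by simp_all
  have error: "\<bar>f u - g u\<bar> \<le> e u" for u
  proof (cases "0 < u \<and> u \<le> 1")
    case True
    have "\<bar>f u - g u\<bar> = log_kernel n u * \<bar>profile u - log_series K u\<bar>"
      using True log_kernel_nonneg[of u n]
      by (simp add: f_def g_def abs_mult flip: right_diff_distrib)
    also have "\<dots> \<le> log_kernel n u * (profile_const K * u^(K+1))"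
      using True log_kernel_nonneg[of u n] profile_approx[of u K] by (intro mult_left_mono) auto
    finally show ?thesis using True by (simp add: e_def mult_ac)
  qed (simp add: f_def g_def e_def)
  have f_nonneg: "0 \<le> f u" for u
    unfolding f_def
    by (cases "0 < u \<and> u \<le> 1") (auto intro!: mult_nonneg_nonneg log_kernel_nonneg profile_range)
  have g_nonneg: "0 \<le> g u" for u
    unfolding g_def
    by (cases "0 < u \<and> u \<le> 1") (auto intro!: mult_nonneg_nonneg log_kernel_nonneg log_series_nonneg)
  have int_e: "(\<integral>\<^sup>+u. ennreal (e u) \<partial>lborel) = ennreal E"
  proof -
    have "(\<integral>\<^sup>+u. ennreal (e u) \<partial>lborel)
            = (\<integral>\<^sup>+u. ennreal (profile_const K)
                    * ennreal (log_kernel n u * u^(K+1) * indicator {0<..1} u) \<partial>lborel)"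
      unfolding e_def by (intro nn_integral_cong) (rule ennreal_mult'[OF profile_const_nonneg])
    also have "\<dots> = ennreal (profile_const K)
                  * (\<integral>\<^sup>+u. ennreal (log_kernel n u * u^(K+1) * indicator {0<..1} u) \<partial>lborel)"
      by (rule nn_integral_cmult) measurable
    also have "\<dots> = ennreal (profile_const K) * ennreal (fact n / real (K+1)^(n+1))"
      using log_kernel_moment[of "K+1" n] by simp
    also have "\<dots> = ennreal E"
      unfolding E_def by (rule ennreal_mult'[OF profile_const_nonneg, symmetric])
    finally show ?thesis .
  qed
  have int_g: "(\<integral>\<^sup>+u. ennreal (g u) \<partial>lborel) = ennreal (fact n * moment_sum K n)"
    unfolding g_def by (rule nn_integral_log_series)
  have int_f: "P = (\<integral>\<^sup>+u. ennreal (f u) \<partial>lborel)" by (simp add: P_def f_def)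
  have "(\<integral>\<^sup>+u. ennreal (f u) \<partial>lborel)
          \<le> (\<integral>\<^sup>+u. ennreal (g u) \<partial>lborel) + (\<integral>\<^sup>+u. ennreal (e u) \<partial>lborel)"
    by (rule nn_integral_le_add_error) (use g_nonneg error in auto)
  thus "P \<le> ennreal (fact n * moment_sum K n) + ennreal E"
    by (simp only: int_e int_g int_f)
  have "(\<integral>\<^sup>+u. ennreal (g u) \<partial>lborel)
          \<le> (\<integral>\<^sup>+u. ennreal (f u) \<partial>lborel) + (\<integral>\<^sup>+u. ennreal (e u) \<partial>lborel)"
    by (rule nn_integral_le_add_error) (use f_nonneg error in \<open>auto simp: abs_minus_commute\<close>)
  thus "ennreal (fact n * moment_sum K n) \<le> P + ennreal E"
    by (simp only: int_e int_g int_f)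
qed

lemma integrand_on_T_measurable_lborel:
  "(\<lambda>p. indicator T p * integrand n p) \<in> borel_measurable lborel"
  using integrand_on_T_measurable by (simp add: lborel_prod)

lemma nn_integral_T_finite:
  "(\<integral>\<^sup>+p. ennreal (indicator T p * integrand n p) \<partial>lborel) < \<infinity>"
proof -
  have "(\<integral>\<^sup>+p. ennreal (indicator T p * integrand n p) \<partial>lborel)
          \<le> ennreal (fact n * moment_sum 0 n) + ennreal (profile_const 0 * (fact n / real (0+1)^(n+1)))"
    unfolding nn_integral_T by (rule nn_integral_profile_bounds(1))
  also have "\<dots> < \<infinity>" by simp
  finally show ?thesis .
qed

lemma integrable_on_T: "set_integrable lborel T (integrand n)"
  unfolding set_integrable_def
  using integrand_on_T_measurable_lborel integrand_on_T_nonneg nn_integral_T_finite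
  by (intro integrableI_nonneg) auto

lemma I_nonneg: "0 \<le> I n"
  unfolding I_def set_lebesgue_integral_def using integrand_on_T_nonneg by (simp add: integral_nonneg)

lemma I_eq_profile_integral:
  "ennreal (I n) = (\<integral>\<^sup>+u. ennreal (log_kernel n u * profile u * indicator {0<..1} u) \<partial>lborel)"
proof -
  have "I n = enn2real (\<integral>\<^sup>+p. ennreal (indicator T p * integrand n p) \<partial>lborel)"
    unfolding I_def set_lebesgue_integral_def
    using integrand_on_T_measurable_lborel integrand_on_T_nonneg by (simp add: integral_eq_nn_integral)
  thus ?thesis using nn_integral_T_finite[of n] by (simp add: nn_integral_T)
qed

lemma I_expansion_error:
  "\<bar>I n / fact n - moment_sum K n\<bar> \<le> profile_const K / real (K+1)^(n+1)"
proof -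
  define E where "E = profile_const K * (fact n / real (K+1)^(n+1))"
  have E_nonneg: "0 \<le> E" unfolding E_def using profile_const_nonneg by simp
  have main_nonneg: "0 \<le> fact n * moment_sum K n"
    unfolding moment_sum_def by (simp add: sum_nonneg central_binom_nonneg)
  have "I n \<le> fact n * moment_sum K n + E"
    using nn_integral_profile_bounds(1)[of n K] E_nonneg main_nonneg
    by (simp add: E_def I_eq_profile_integral[symmetric] flip: ennreal_plus)
  moreover have "fact n * moment_sum K n \<le> I n + E"
    using nn_integral_profile_bounds(2)[of n K] E_nonneg I_nonneg[of n]
    by (simp add: E_def I_eq_profile_integral[symmetric] flip: ennreal_plus)
  ultimately have "\<bar>I n - fact n * moment_sum K n\<bar> / fact n \<le> E / fact n"
    by (intro divide_right_mono) auto
  thus ?thesis by (simp add: E_def abs_div_pos diff_divide_distrib)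
qed

lemma I_expansion_bigo:
  "(\<lambda>n. I n / fact n - moment_sum K n) \<in> O(\<lambda>n. real (K + 1) powr - real n)"
proof -
  have "norm (I n / fact n - moment_sum K n) \<le> profile_const K * norm (real (K + 1) powr - real n)"
    for n
  proof -
    have "norm (I n / fact n - moment_sum K n) \<le> profile_const K / real (K+1)^(n+1)"
      using I_expansion_error by simp
    also have "\<dots> \<le> profile_const K / real (K+1)^n"
      using profile_const_nonneg by (intro divide_left_mono) auto
    also have "\<dots> = profile_const K * norm (real (K + 1) powr - real n)"
      by (simp add: powr_minus powr_realpow divide_inverse)
    finally show ?thesis .
  qed
  thus ?thesis by (intro bigoI[where c = "profile_const K"] always_eventually allI)
qed

text \<open>With K = 1 the main term is the constant C(2,1) = 2 and the error is O(2^-n).\<close>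

lemma I_asymp_equiv: "I \<sim>[at_top] (\<lambda>n. 2 * fact n)"
proof -
  have bound: "norm (I n / fact n - 2) \<le> profile_const 1 * ((1/2) * (1/2)^n)" for n
  proof -
    have "moment_sum 1 n = 2" by (simp add: moment_sum_def central_binom_def)
    hence "norm (I n / fact n - 2) \<le> profile_const 1 / real (1+1)^(n+1)"
      using I_expansion_error[of n 1] by simp
    also have "\<dots> = profile_const 1 * ((1/2) * (1/2)^n)" by (simp add: power_divide field_simps)
    finally show ?thesis .
  qed
  have "(\<lambda>n. profile_const 1 * ((1/2) * (1/2)^n)) \<longlonglongrightarrow> profile_const 1 * ((1/2) * 0)"
    by (intro tendsto_mult tendsto_const LIMSEQ_power_zero) simp
  hence "(\<lambda>n. profile_const 1 * ((1/2) * (1/2)^n)) \<longlonglongrightarrow> 0" by simp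
  hence "(\<lambda>n. I n / fact n - 2) \<longlonglongrightarrow> 0"
    by (rule Lim_null_comparison[rotated]) (intro always_eventually allI bound)
  hence "(\<lambda>n. (I n / fact n - 2) / 2 + 1) \<longlonglongrightarrow> 0 / 2 + 1"
    by (intro tendsto_add tendsto_divide tendsto_const) auto
  moreover have "(\<lambda>n. (I n / fact n - 2) / 2 + 1) = (\<lambda>n. I n / (2 * fact n))"
    by (rule ext) (simp add: field_simps)
  ultimately show ?thesis by (intro asymp_equivI') simp
qed

theorem theorem3:
  shows "(\<forall>n. set_integrable lborel T (integrand n))
    \<and> (I \<sim>[at_top] (\<lambda>n. 2 * fact n))
    \<and> (\<forall>K::nat. K \<ge> 1 \<longrightarrow>
         (\<lambda>n. I n / fact n - (\<Sum>j=1..K. real ((2*j) choose j) / real j ^ (n + 2)))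
           \<in> O(\<lambda>n. real (K + 1) powr - real n))"
proof (intro conjI allI impI)
  show "set_integrable lborel T (integrand n)" for n by (rule integrable_on_T)
  show "I \<sim>[at_top] (\<lambda>n. 2 * fact n)" by (rule I_asymp_equiv)
  fix K :: nat
  have "(\<Sum>j=1..K. real ((2*j) choose j) / real j ^ (n + 2)) = moment_sum K n" for n
    by (simp add: moment_sum_def central_binom_def)
  thus "(\<lambda>n. I n / fact n - (\<Sum>j=1..K. real ((2*j) choose j) / real j ^ (n + 2)))
          \<in> O(\<lambda>n. real (K + 1) powr - real n)"
    using I_expansion_bigo[of K] by simp
qed

end
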